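(* Let $(z_n)_{n\ge1}$ be real numbers in $(0,1)$ with $\sum_{n}(1-z_n)<\infty$ and $z_n\to1$, and let $B(z)=\prod_{n=1}^\infty\frac{z_n-z}{1-z_nz}=\sum_{n\ge0}a_nz^n$. With $A_n=a_0+\dots+a_n$ and $M_n=\frac{A_0+\dots+A_{n-1}}n$: if $(M_n)$ converges to some limit $c$, then $c=0$. *)

theory Defs
  imports "HOL-Analysis.Analysis"
begin

end

theory Submission
  imports Defs
begin

(* Let B(w) = \<Prod>n (z\<^sub>n - w) / (1 - z\<^sub>n w) = \<Sum> a\<^sub>n w\<^sup>n be the Blaschke product with positive
   zeros z\<^sub>n \<rightarrow> 1, and let S\<^sub>n = \<Sum>\<^bsub>k\<le>n\<^esub> \<Sum>\<^bsub>j\<le>k\<^esub> a\<^sub>j be the second partial sums, so that the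
   Cesaro means of the partial sums are S\<^sub>n / (n+1).  The proof is an Abelian argument
   evaluated at the zeros of B:

   1. B vanishes at every z\<^sub>k, because the product converges absolutely and has a zero factor.
   2. Summation by parts twice: \<Sum> a\<^sub>n r\<^sup>n = (1 - r)\<^sup>2 \<Sum> S\<^sub>n r\<^sup>n for |r| < 1 (S\<^sub>n = O(n)).
      Hence \<Sum> S\<^sub>n z\<^sub>k\<^sup>n = 0, and with \<Sum> (n+1) r\<^sup>n = 1/(1-r)\<^sup>2 this gives
      c = (1 - z\<^sub>k)\<^sup>2 \<Sum> ((n+1) c - S\<^sub>n) z\<^sub>k\<^sup>n.
   3. Since (n+1) c - S\<^sub>n = o(n), the Abel mean (1 - t)\<^sup>2 \<Sum> |(n+1) c - S\<^sub>n| t\<^sup>n tends to 0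
      as t \<rightarrow> 1\<^sup>-.  Letting t = z\<^sub>k \<rightarrow> 1 forces c = 0. *)

(* A Blaschke factor with real zero \<zeta> \<in> [0,1] differs from 1 by O(1 - \<zeta>), uniformly on
   compact subsets of the disc; this is what makes the product converge. *)
lemma blaschke_factor_deviation:
  fixes \<zeta> :: real and w :: complex
  assumes "0 \<le> \<zeta>" "\<zeta> \<le> 1" "norm w < 1"
  shows "norm ((of_real \<zeta> - w) / (1 - of_real \<zeta> * w) - 1) \<le> 2 / (1 - norm w) * (1 - \<zeta>)"
proof -
  have den_lower: "1 - norm w \<le> norm (1 - of_real \<zeta> * w)"
  proof -
    have "norm (of_real \<zeta> * w) \<le> norm w"
      using assms by (simp add: norm_mult mult_left_le_one_le)
    then show ?thesis using norm_triangle_ineq2[of 1 "of_real \<zeta> * w"] by simp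
  qed
  have den_pos: "0 < norm (1 - of_real \<zeta> * w)" using den_lower assms(3) by linarith
  have "(of_real \<zeta> - w) / (1 - of_real \<zeta> * w) - 1 = - (of_real (1 - \<zeta>) * (1 + w)) / (1 - of_real \<zeta> * w)"
    using den_pos by (simp add: field_simps)
  then have "norm ((of_real \<zeta> - w) / (1 - of_real \<zeta> * w) - 1) = (1 - \<zeta>) * norm (1 + w) / norm (1 - of_real \<zeta> * w)"
    using assms(2) by (simp only: norm_divide norm_minus_cancel norm_mult norm_of_real)
  also have "\<dots> \<le> (1 - \<zeta>) * 2 / (1 - norm w)"
  proof (rule frac_le)
    show "(1 - \<zeta>) * norm (1 + w) \<le> (1 - \<zeta>) * 2"
      using assms norm_triangle_ineq[of 1 w] by (intro mult_left_mono) auto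
  qed (use assms den_lower in auto)
  finally show ?thesis by (simp add: mult.commute)
qed

(* The Blaschke product converges (absolutely) and therefore vanishes at each of its zeros. *)
lemma blaschke_product_vanishes_at_zero:
  fixes z :: "nat \<Rightarrow> real" and k :: nat
  assumes z_range: "\<And>n. 0 < z n \<and> z n < 1"
    and summ: "summable (\<lambda>n. 1 - z n)"
  shows "(\<Prod>n. (complex_of_real (z n) - complex_of_real (z k))
                  / (1 - complex_of_real (z n) * complex_of_real (z k))) = 0"
proof -
  define w where "w = complex_of_real (z k)"
  define b where "b n = (complex_of_real (z n) - w) / (1 - complex_of_real (z n) * w)" for n
  have w: "norm w < 1" using z_range[of k] by (simp add: w_def)
  have "summable (\<lambda>n. norm (b n - 1))"
  proof (rule summable_comparison_test)
    show "\<exists>N. \<forall>n\<ge>N. norm (norm (b n - 1)) \<le> 2 / (1 - norm w) * (1 - z n)"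
      using blaschke_factor_deviation[OF _ _ w] z_range by (auto simp: b_def less_imp_le)
    show "summable (\<lambda>n. 2 / (1 - norm w) * (1 - z n))"
      by (rule summable_mult[OF summ])
  qed
  then have "b has_prod prodinf b"
    by (intro convergent_prod_has_prod abs_convergent_prod_imp_convergent_prod
        summable_imp_abs_convergent_prod)
  moreover have "b k = 0" by (simp add: b_def w_def)
  ultimately show ?thesis unfolding b_def w_def by (rule has_prod_zeroI)
qed

lemma powser_partial_sums:
  fixes f :: "nat \<Rightarrow> 'a::{real_normed_field,banach}"
  assumes "summable (\<lambda>n. (\<Sum>k\<le>n. f k) * r ^ n)"
  shows "(\<lambda>n. f n * r ^ n) sums ((1 - r) * (\<Sum>n. (\<Sum>k\<le>n. f k) * r ^ n))"
proof -
  define P where "P n = (\<Sum>k<n. f k)" for n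
  have P_Suc: "P (Suc n) = (\<Sum>k\<le>n. f k)" for n
    by (simp add: P_def lessThan_Suc_atMost)
  have sum_Suc: "(\<lambda>n. P (Suc n) * r ^ n) sums (\<Sum>n. (\<Sum>k\<le>n. f k) * r ^ n)"
    using assms by (simp add: P_Suc summable_sums)
  have "summable (\<lambda>n. P n * r ^ n)"
    using sums_summable[OF sum_Suc] by (subst (asm) summable_powser_split_head)
  then have sum_P: "(\<lambda>n. P n * r ^ n) sums (r * (\<Sum>n. (\<Sum>k\<le>n. f k) * r ^ n))"
    using powser_split_head(1)[of P r] sum_Suc
    by (simp add: P_def sums_iff mult.commute)
  have "(\<lambda>n. P (Suc n) * r ^ n - P n * r ^ n)
          sums ((\<Sum>n. (\<Sum>k\<le>n. f k) * r ^ n) - r * (\<Sum>n. (\<Sum>k\<le>n. f k) * r ^ n))"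
    by (rule sums_diff[OF sum_Suc sum_P])
  then show ?thesis by (simp add: P_def algebra_simps)
qed

lemma summable_powser_linear_growth:
  fixes g :: "nat \<Rightarrow> 'a::{real_normed_field,banach}"
  assumes "Bseq (\<lambda>n. g n / of_nat (Suc n))" and "norm r < 1"
  shows "summable (\<lambda>n. g n * r ^ n)"
proof -
  obtain K where K: "\<forall>n. norm (g n / of_nat (Suc n)) \<le> K"
    using BseqD[OF assms(1)] by blast
  have bound: "norm (g n * r ^ n) \<le> K * (of_nat (Suc n) * norm r ^ n)" for n
  proof -
    have "norm (g n) \<le> K * of_nat (Suc n)"
      using K by (simp add: norm_divide field_simps del: of_nat_Suc)
    then show ?thesis
      by (simp add: norm_mult norm_power mult.assoc[symmetric] mult_right_mono del: of_nat_Suc)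
  qed
  have "summable (\<lambda>n. K * (of_nat (Suc n) * norm r ^ n))"
    using geometric_deriv_sums[of "norm r"] assms(2) by (intro summable_mult) (auto simp: sums_iff)
  then show ?thesis by (rule summable_comparison_test'[OF _ bound])
qed

lemma powser_second_partial_sums:
  fixes a :: "nat \<Rightarrow> 'a::{real_normed_field,banach}"
  assumes "summable (\<lambda>n. (\<Sum>k\<le>n. \<Sum>j\<le>k. a j) * r ^ n)"
  shows "(\<lambda>n. a n * r ^ n) sums ((1 - r)^2 * (\<Sum>n. (\<Sum>k\<le>n. \<Sum>j\<le>k. a j) * r ^ n))"
proof -
  have "(\<lambda>n. (\<Sum>j\<le>n. a j) * r ^ n) sums ((1 - r) * (\<Sum>n. (\<Sum>k\<le>n. \<Sum>j\<le>k. a j) * r ^ n))"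
    using powser_partial_sums[OF assms] .
  then have "(\<lambda>n. a n * r ^ n) sums ((1 - r) * ((1 - r) * (\<Sum>n. (\<Sum>k\<le>n. \<Sum>j\<le>k. a j) * r ^ n)))"
    using powser_partial_sums[of a r] by (simp add: sums_iff)
  then show ?thesis by (simp add: power2_eq_square mult.assoc)
qed

lemma abel_mean_tail_bound:
  fixes g :: "nat \<Rightarrow> real"
  assumes nonneg: "\<And>n. 0 \<le> g n"
    and tail: "\<And>n. n \<ge> N \<Longrightarrow> g n \<le> \<epsilon> * real (Suc n)"
    and t: "0 < t" "t < 1"
  shows "(1 - t)^2 * (\<Sum>n. g n * t ^ n) \<le> (1 - t)^2 * (\<Sum>n<N. g n) + \<epsilon>"
proof -
  define D where "D n = (if n < N then g n else 0)" for n
  have "0 \<le> \<epsilon> * real (Suc N)" using tail[of N] nonneg[of N] by linarith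
  then have "0 \<le> \<epsilon>" by (simp add: zero_le_mult_iff del: of_nat_Suc)
  have majorant: "(\<lambda>n. D n + \<epsilon> * (real (Suc n) * t ^ n)) sums ((\<Sum>n<N. g n) + \<epsilon> * (1 / (1 - t)^2))"
    using sums_If_finite_set[of "{..<N}" g] geometric_deriv_sums[of t] t
    by (intro sums_add sums_mult) (auto simp: D_def)
  have termwise: "g n * t ^ n \<le> D n + \<epsilon> * (real (Suc n) * t ^ n)" for n
  proof (cases "n < N")
    case True
    have "g n * t ^ n \<le> g n" using t nonneg[of n] by (simp add: mult_left_le power_le_one)
    moreover have "0 \<le> \<epsilon> * (real (Suc n) * t ^ n)" using \<open>0 \<le> \<epsilon>\<close> t by simp
    ultimately show ?thesis using True by (simp add: D_def)
  next
    case False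
    then show ?thesis using tail[of n] t by (simp add: D_def mult.assoc[symmetric] mult_right_mono)
  qed
  have "summable (\<lambda>n. g n * t ^ n)"
    by (rule summable_comparison_test'[OF sums_summable[OF majorant]]) (use nonneg termwise t in auto)
  then have "(\<Sum>n. g n * t ^ n) \<le> (\<Sum>n. D n + \<epsilon> * (real (Suc n) * t ^ n))"
    by (intro suminf_le termwise sums_summable[OF majorant])
  also have "\<dots> = (\<Sum>n<N. g n) + \<epsilon> * (1 / (1 - t)^2)"
    using majorant by (rule sums_unique[symmetric])
  finally have "(1 - t)^2 * (\<Sum>n. g n * t ^ n) \<le> (1 - t)^2 * ((\<Sum>n<N. g n) + \<epsilon> * (1 / (1 - t)^2))"
    by (intro mult_left_mono) auto
  also have "\<dots> = (1 - t)^2 * (\<Sum>n<N. g n) + \<epsilon>" using t by (simp add: field_simps)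
  finally show ?thesis .
qed

lemma abel_mean_of_sublinear:
  fixes g :: "nat \<Rightarrow> real"
  assumes nonneg: "\<And>n. 0 \<le> g n" and sublinear: "(\<lambda>n. g n / real (Suc n)) \<longlonglongrightarrow> 0"
  shows "((\<lambda>t. (1 - t)^2 * (\<Sum>n. g n * t ^ n)) \<longlongrightarrow> 0) (at_left 1)"
proof (rule tendstoI)
  fix e :: real assume "e > 0"
  obtain N where N_lt: "\<forall>n\<ge>N. g n / real (Suc n) < e / 2"
    using order_tendstoD(2)[OF sublinear, of "e / 2"] \<open>e > 0\<close>
    unfolding eventually_sequentially by auto
  have tail: "g n \<le> e / 2 * real (Suc n)" if "n \<ge> N" for n
    using N_lt that by (auto simp: field_simps simp del: of_nat_Suc intro: less_imp_le)
  have "((\<lambda>t. (1 - t)^2 * (\<Sum>n<N. g n)) \<longlongrightarrow> (1 - 1)^2 * (\<Sum>n<N. g n)) (at_left (1::real))"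
    by (intro tendsto_intros)
  then have "eventually (\<lambda>t. (1 - t)^2 * (\<Sum>n<N. g n) < e / 2) (at_left (1::real))"
    using \<open>e > 0\<close> by (intro order_tendstoD) auto
  moreover have "eventually (\<lambda>t. 0 < t \<and> t < 1) (at_left (1::real))"
    by (intro eventually_at_leftI[of 0]) auto
  ultimately show "eventually (\<lambda>t. dist ((1 - t)^2 * (\<Sum>n. g n * t ^ n)) 0 < e) (at_left 1)"
  proof eventually_elim
    case (elim t)
    have "summable (\<lambda>n. g n * t ^ n)"
      using sublinear elim
      by (intro summable_powser_linear_growth) (auto intro: convergent_imp_Bseq convergentI)
    then have "0 \<le> (\<Sum>n. g n * t ^ n)"
      using nonneg elim by (intro suminf_nonneg) auto
    with abel_mean_tail_bound[OF nonneg tail, where N = N and t = t] elim show ?case by simp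
  qed
qed

lemma cesaro_limit_as_abel_mean:
  fixes S :: "nat \<Rightarrow> 'a::{real_normed_field,banach}"
  assumes r: "norm r < 1" and S_sums: "(\<lambda>n. S n * r ^ n) sums 0"
  shows "c = (1 - r)^2 * (\<Sum>n. (of_nat (Suc n) * c - S n) * r ^ n)"
proof -
  have "(\<lambda>n. c * (of_nat (Suc n) * r ^ n) - S n * r ^ n) sums (c * (1 / (1 - r)^2) - 0)"
    by (intro sums_diff sums_mult geometric_deriv_sums r S_sums)
  then have "(\<Sum>n. (of_nat (Suc n) * c - S n) * r ^ n) = c / (1 - r)^2"
    by (simp add: sums_iff algebra_simps)
  moreover have "r \<noteq> 1" using r by auto
  ultimately show ?thesis by simp
qed

lemma cesaro_deviation_sublinear:
  fixes S :: "nat \<Rightarrow> 'a::real_normed_field"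
  assumes "(\<lambda>n. S n / of_nat (Suc n)) \<longlonglongrightarrow> c"
  shows "(\<lambda>n. norm (of_nat (Suc n) * c - S n) / real (Suc n)) \<longlonglongrightarrow> 0"
proof -
  have "(\<lambda>n. c - S n / of_nat (Suc n)) \<longlonglongrightarrow> 0"
    using tendsto_diff[OF tendsto_const assms, of c] by simp
  then have "(\<lambda>n. norm (c - S n / of_nat (Suc n))) \<longlonglongrightarrow> 0"
    by (rule tendsto_norm_zero)
  moreover have "norm (c - S n / of_nat (Suc n)) = norm (of_nat (Suc n) * c - S n) / real (Suc n)" for n
  proof -
    have "c - S n / of_nat (Suc n) = (of_nat (Suc n) * c - S n) / of_nat (Suc n)"
      by (simp add: field_simps del: of_nat_Suc)
    then show ?thesis by (simp add: norm_divide del: of_nat_Suc)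
  qed
  ultimately show ?thesis by simp
qed

lemma cesaro_limit_bound_at_zero:
  fixes a :: "nat \<Rightarrow> 'a::{real_normed_field,banach}" and t :: real
  defines "S \<equiv> \<lambda>n. \<Sum>k\<le>n. \<Sum>j\<le>k. a j"
  assumes mean_lim: "(\<lambda>n. S n / of_nat (Suc n)) \<longlonglongrightarrow> c"
    and t: "0 < t" "t < 1"
    and zero: "(\<lambda>n. a n * of_real t ^ n) sums 0"
  shows "norm c \<le> (1 - t)^2 * (\<Sum>n. norm (of_nat (Suc n) * c - S n) * t ^ n)"
proof -
  define r :: 'a where "r = of_real t"
  have r: "norm r < 1" "norm r = t" "r \<noteq> 1" "norm (1 - r) = 1 - t"
  proof -
    have "1 - r = of_real (1 - t)" by (simp add: r_def)
    then show "norm (1 - r) = 1 - t" using t by (simp del: of_real_diff)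
  qed (use t in \<open>auto simp: r_def\<close>)
  have "summable (\<lambda>n. S n * r ^ n)"
    using mean_lim r by (intro summable_powser_linear_growth) (auto intro: convergent_imp_Bseq convergentI)
  moreover have "(\<lambda>n. a n * r ^ n) sums ((1 - r)^2 * (\<Sum>n. S n * r ^ n))"
    using calculation unfolding S_def by (rule powser_second_partial_sums)
  then have "(1 - r)^2 * (\<Sum>n. S n * r ^ n) = 0"
    using zero sums_unique2 by (fastforce simp: r_def)
  ultimately have "(\<lambda>n. S n * r ^ n) sums 0"
    using r(3) by (simp add: summable_sums_iff)
  then have "c = (1 - r)^2 * (\<Sum>n. (of_nat (Suc n) * c - S n) * r ^ n)"
    by (rule cesaro_limit_as_abel_mean[OF r(1)])
  also have "norm \<dots> \<le> (1 - t)^2 * (\<Sum>n. norm (of_nat (Suc n) * c - S n) * t ^ n)"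
  proof -
    have "summable (\<lambda>n. norm (of_nat (Suc n) * c - S n) * t ^ n)"
      using cesaro_deviation_sublinear[OF mean_lim] t
      by (intro summable_powser_linear_growth) (auto intro: convergent_imp_Bseq convergentI)
    then have "norm (\<Sum>n. (of_nat (Suc n) * c - S n) * r ^ n)
                 \<le> (\<Sum>n. norm (of_nat (Suc n) * c - S n) * t ^ n)"
      using summable_norm[of "\<lambda>n. (of_nat (Suc n) * c - S n) * r ^ n"]
      by (simp add: norm_mult norm_power r(2))
    then show ?thesis
      by (simp add: norm_mult norm_power r(4) mult_left_mono)
  qed
  finally show ?thesis .
qed

theorem mainTheorem10:
  fixes z :: "nat \<Rightarrow> real" and a :: "nat \<Rightarrow> complex" and c :: complex
  assumes z_range: "\<And>n. 0 < z n \<and> z n < 1"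
    and summ: "summable (\<lambda>n. 1 - z n)"
    and lim1: "z \<longlonglongrightarrow> 1"
    and coeffs: "\<And>w::complex. norm w < 1 \<Longrightarrow>
        (\<lambda>n. a n * w ^ n) sums (\<Prod>n. (complex_of_real (z n) - w) / (1 - complex_of_real (z n) * w))"
    and cesaro: "(\<lambda>n. (\<Sum>k<n. \<Sum>j\<le>k. a j) / of_nat n) \<longlonglongrightarrow> c"
  shows "c = 0"
proof -
  define S where "S n = (\<Sum>k\<le>n. \<Sum>j\<le>k. a j)" for n
  have mean_lim: "(\<lambda>n. S n / of_nat (Suc n)) \<longlonglongrightarrow> c"
    using LIMSEQ_Suc[OF cesaro] by (simp add: S_def lessThan_Suc_atMost del: of_nat_Suc)
  have zero: "(\<lambda>n. a n * of_real (z k) ^ n) sums 0" for k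
    using coeffs[of "of_real (z k)"] z_range[of k] blaschke_product_vanishes_at_zero[OF z_range summ]
    by simp
  define h where "h t = (1 - t)^2 * (\<Sum>n. norm (of_nat (Suc n) * c - S n) * t ^ n)" for t
  have bound: "norm c \<le> h (z k)" for k
    using cesaro_limit_bound_at_zero[of a c "z k"] mean_lim z_range[of k] zero[of k]
    by (simp add: S_def h_def)
  have "(h \<longlongrightarrow> 0) (at_left 1)"
    unfolding h_def by (intro abel_mean_of_sublinear cesaro_deviation_sublinear mean_lim) simp
  moreover have "filterlim z (at_left 1) sequentially"
    using z_range by (intro tendsto_imp_filterlim_at_left lim1) simp
  ultimately have "(\<lambda>k. h (z k)) \<longlonglongrightarrow> 0"
    by (rule filterlim_compose)
  then have "norm c \<le> 0"
    by (rule LIMSEQ_le_const) (use bound in blast)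
  then show ?thesis by simp
qed

end
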